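(* Let $R$ be a ring with identity and let $a \in R$ satisfy $a^2 = 1$. If $a = e + q$ where $e \in R$ is an idempotent ($e^2 = e$) and $q \in R$ is nilpotent, then $e = 1$. In particular, every involution of $R$ that is the sum of an idempotent and a nilpotent is of the form $1 + q$ for some nilpotent $q \in R$.
   Context: Rings are associative with identity (not necessarily commutative). *)

theory Defs
  imports Main
begin

definition nilpotent :: "'a::ring_1 \<Rightarrow> bool" where
  "nilpotent q \<longleftrightarrow> (\<exists>n::nat. q ^ n = 0)"

end

theory Submission
  imports Defs
begin

text \<open>Write \<open>1 - e = (e + q)\<^sup>2 - e\<^sup>2 = e q + q e + q\<^sup>2\<close>. Commuting this with \<open>q\<close> shows that
  the commutator \<open>c = e q - q e\<close> satisfies \<open>c = -(q c + c q)\<close>; iterating, \<open>c\<close> is a sum of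
  terms \<open>q\<^sup>i c q\<^sup>j\<close> with \<open>i + j\<close> arbitrarily large, so \<open>c = 0\<close>. Once \<open>e\<close> and \<open>q\<close> commute,
  multiplying the identity by \<open>1 - e\<close> gives \<open>q\<^sup>2 (1 - e) = 1 - e\<close>, and a vector fixed by a
  nilpotent element vanishes.\<close>

lemma power_eq_0_ge:
  fixes q :: "'a::ring_1"
  assumes "q ^ n = 0" "n \<le> i"
  shows "q ^ i = 0"
proof -
  have "q ^ i = q ^ n * q ^ (i - n)" using assms(2) by (simp flip: power_add)
  with assms(1) show ?thesis by simp
qed

lemma nilpotent_power2:
  fixes q :: "'a::ring_1"
  assumes "nilpotent q"
  shows "nilpotent (q ^ 2)"
proof -
  obtain n where "q ^ n = 0" using assms unfolding nilpotent_def by blast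
  then have "(q ^ 2) ^ n = 0" by (simp add: power_eq_0_ge flip: power_mult)
  then show ?thesis unfolding nilpotent_def by blast
qed

lemma nilpotent_fixed_point_eq_0:
  fixes p x :: "'a::ring_1"
  assumes "nilpotent p" and fixed: "p * x = x"
  shows "x = 0"
proof -
  obtain n where pn: "p ^ n = 0" using assms(1) unfolding nilpotent_def by blast
  have "p ^ k * x = x" for k
    by (induction k) (simp_all add: mult.assoc fixed)
  from this[of n] show ?thesis by (simp add: pn)
qed

lemma eq_0_if_eq_neg_anticommutator:
  fixes q c :: "'a::ring_1"
  assumes "nilpotent q" and c: "c = -(q * c + c * q)"
  shows "c = 0"
proof -
  obtain n where qn: "q ^ n = 0" using assms(1) unfolding nilpotent_def by blast
  have step: "q^i * c * q^j = -(q^Suc i * c * q^j + q^i * c * q^Suc j)" for i j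
  proof -
    have "q^i * c * q^j = q^i * (-(q * c + c * q)) * q^j" using c by simp
    also have "\<dots> = -(q^i * q * c * q^j + q^i * c * (q * q^j))" by (simp add: algebra_simps)
    finally show ?thesis by (simp only: power_Suc2 power_commutes)
  qed
  have "\<forall>i j. 2 * n \<le> i + j + k \<longrightarrow> q^i * c * q^j = 0" for k
  proof (induction k)
    case 0
    show ?case
    proof (intro allI impI)
      fix i j assume "2 * n \<le> i + j + 0"
      then have "n \<le> i \<or> n \<le> j" by arith
      then show "q^i * c * q^j = 0" using power_eq_0_ge[OF qn] by auto
    qed
  next
    case (Suc k)
    show ?case
    proof (intro allI impI)
      fix i j assume "2 * n \<le> i + j + Suc k"
      then have "q^Suc i * c * q^j = 0" "q^i * c * q^Suc j = 0"
        using Suc.IH by (metis add_Suc add_Suc_right)+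
      then show "q^i * c * q^j = 0" using step[of i j] by simp
    qed
  qed
  then have "q^0 * c * q^0 = 0" by (metis add_0 le_add2)
  then show ?thesis by simp
qed

lemma idempotent_commutes_with_nilpotent_if_sum_involution:
  fixes e q :: "'a::ring_1"
  assumes "nilpotent q" and ee: "e * e = e" and sq: "e * q + q * e + q * q = 1 - e"
  shows "e * q = q * e"
proof -
  have "q * (e * q + q * e + q * q) - (e * q + q * e + q * q) * q = q * (1 - e) - (1 - e) * q"
    by (simp only: sq)
  then have "e * q - q * e = -(q * (e * q - q * e) + (e * q - q * e) * q)"
    by (simp add: algebra_simps)
  with assms(1) show ?thesis using eq_0_if_eq_neg_anticommutator by fastforce
qed

theorem proposition1:
  fixes a e q :: "'a::ring_1"
  assumes "a ^ 2 = 1"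
    and "e ^ 2 = e"
    and "nilpotent q"
    and "a = e + q"
  shows "e = 1 \<and> a = 1 + q"
proof -
  have ee: "e * e = e" using assms(2) by (simp add: power2_eq_square)
  have "(e + q) * (e + q) = 1" using assms(1,4) by (simp add: power2_eq_square)
  then have sq: "e * q + q * e + q * q = 1 - e" using ee by (simp add: algebra_simps)
  have comm: "e * q = q * e"
    using idempotent_commutes_with_nilpotent_if_sum_involution[OF assms(3) ee sq] .
  have "(e * q + q * e + q * q) * (1 - e) = (1 - e) * (1 - e)" by (simp only: sq)
  then have "q ^ 2 * (1 - e) = 1 - e"
    using ee comm by (simp add: algebra_simps power2_eq_square)
  then have "1 - e = 0" using nilpotent_fixed_point_eq_0 nilpotent_power2[OF assms(3)] by blast
  then show ?thesis using assms(4) by simp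
qed

end
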